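(* Let $n\ge 1$, $m\ge 2$, $0\le k\le n-1$ with $(m,k)\ne(2,0)$. Then the class $\mathcal{C}^k_{ac}$ of all complete $k$-bounded acyclic CP-nets over $n$ variables of domain size $m$, over the instance space $\mathcal{X}_{swap}$, is not maximal; in particular, it is not maximum.
   Context: Variables $V=\{v_1,\dots,v_n\}$, each with a finite domain of size $m$. An outcome assigns a value to every variable; $\mathcal{O}_X$ denotes assignments to $X\subseteq V$. A complete CP-net specifies for each $v_i$ a parent set $Pa(v_i)\subseteq V\setminus\{v_i\}$ and, for each context $\gamma\in\mathcal{O}_{Pa(v_i)}$, a strict total order $\succ^{v_i}_\gamma$ on $D_{v_i}$; parents are non-dummy. Acyclic: graph with edges $(v_j,v_i)$, $v_j\in Pa(v_i)$, acyclic; $k$-bounded: all $|Pa(v_i)|\le k$. Improving flip: changing only $v_i$ to a value preferred under $\succ^{v_i}_{o[Pa(v_i)]}$; $o'\succ o$ iff a nonempty sequence of improving flips leads from $o$ to $o'$. A swap is an ordered pair $x=(x.1,x.2)$ of outcomes differing in exactly one variable; $\mathcal{X}_{swap}$ contains exactly one ordering of each such pair (fixed arbitrarily); a CP-net $N$ is the concept $c_N(x)=1$ iff $x.1\succ x.2$. For a finite class $\mathcal{C}$ over instance space $\mathcal{X}$ with VC dimension $d$: $\mathcal{C}$ is maximum if $|\mathcal{C}|=\sum_{i=0}^d\binom{|\mathcal{X}|}{i}$; $\mathcal{C}$ is maximal if adding any concept over $\mathcal{X}$ not in $\mathcal{C}$ increases the VC dimension. *)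

theory Defs
  imports Main
begin

definition outcomes :: "nat \<Rightarrow> nat \<Rightarrow> nat list set" where
  "outcomes n m = {u. length u = n \<and> (\<forall>i<n. u ! i < m)}"

text \<open>A CP-net is given by a parent function Pa and, for each variable i and outcome u,
  a relation ord i u on the domain, where (a, b) in ord i u means a is preferred to b
  under the context u restricted to Pa i.  We require ord i u to depend only on the
  parent values of u (so it is a CPT indexed by contexts in O_Pa(i)).\<close>

definition cpnet :: "nat \<Rightarrow> nat \<Rightarrow> (nat \<Rightarrow> nat set) \<Rightarrow> (nat \<Rightarrow> nat list \<Rightarrow> (nat \<times> nat) set) \<Rightarrow> bool" where
  "cpnet n m Pa ord \<longleftrightarrow>
     (\<forall>i<n. Pa i \<subseteq> {0..<n} - {i}) \<and>
     (\<forall>i<n. \<forall>u\<in>outcomes n m.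
        ord i u \<subseteq> {0..<m} \<times> {0..<m} \<and> strict_linear_order_on {0..<m} (ord i u)) \<and>
     (\<forall>i<n. \<forall>u\<in>outcomes n m. \<forall>u'\<in>outcomes n m.
        (\<forall>j\<in>Pa i. u ! j = u' ! j) \<longrightarrow> ord i u = ord i u') \<and>
     (\<forall>i<n. \<forall>j\<in>Pa i. \<exists>u\<in>outcomes n m. \<exists>a<m. ord i u \<noteq> ord i (u[j := a]))"

definition cp_acyclic :: "nat \<Rightarrow> (nat \<Rightarrow> nat set) \<Rightarrow> bool" where
  "cp_acyclic n Pa \<longleftrightarrow> acyclic {(j, i). i < n \<and> j \<in> Pa i}"

definition k_bounded :: "nat \<Rightarrow> nat \<Rightarrow> (nat \<Rightarrow> nat set) \<Rightarrow> bool" where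
  "k_bounded n k Pa \<longleftrightarrow> (\<forall>i<n. card (Pa i) \<le> k)"

definition improving_flip :: "nat \<Rightarrow> nat \<Rightarrow> (nat \<Rightarrow> nat list \<Rightarrow> (nat \<times> nat) set) \<Rightarrow> (nat list \<times> nat list) set" where
  "improving_flip n m ord =
     {(u, u'). u \<in> outcomes n m \<and> (\<exists>i<n. \<exists>a<m. u' = u[i := a] \<and> (a, u ! i) \<in> ord i u)}"

definition cp_prefers :: "nat \<Rightarrow> nat \<Rightarrow> (nat \<Rightarrow> nat list \<Rightarrow> (nat \<times> nat) set) \<Rightarrow> nat list \<Rightarrow> nat list \<Rightarrow> bool" where
  "cp_prefers n m ord u' u \<longleftrightarrow> (u, u') \<in> (improving_flip n m ord)\<^sup>+"

definition is_swap :: "nat \<Rightarrow> nat \<Rightarrow> nat list \<times> nat list \<Rightarrow> bool" where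
  "is_swap n m x \<longleftrightarrow> fst x \<in> outcomes n m \<and> snd x \<in> outcomes n m \<and>
      card {i. i < n \<and> fst x ! i \<noteq> snd x ! i} = 1"

definition swap_space :: "nat \<Rightarrow> nat \<Rightarrow> (nat list \<times> nat list) set \<Rightarrow> bool" where
  "swap_space n m X \<longleftrightarrow> (\<forall>x\<in>X. is_swap n m x) \<and>
     (\<forall>o1 o2. is_swap n m (o1, o2) \<longrightarrow> ((o1, o2) \<in> X \<longleftrightarrow> (o2, o1) \<notin> X))"

text \<open>Concepts over X are identified with the set of instances labelled 1.\<close>
definition cp_concept :: "nat \<Rightarrow> nat \<Rightarrow> (nat \<Rightarrow> nat list \<Rightarrow> (nat \<times> nat) set) \<Rightarrow> (nat list \<times> nat list) set \<Rightarrow> (nat list \<times> nat list) set" where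
  "cp_concept n m ord X = {x \<in> X. cp_prefers n m ord (fst x) (snd x)}"

definition C_ac :: "nat \<Rightarrow> nat \<Rightarrow> nat \<Rightarrow> (nat list \<times> nat list) set \<Rightarrow> (nat list \<times> nat list) set set" where
  "C_ac n m k X = {cp_concept n m ord X | Pa ord.
       cpnet n m Pa ord \<and> cp_acyclic n Pa \<and> k_bounded n k Pa}"

definition shatters :: "'x set set \<Rightarrow> 'x set \<Rightarrow> bool" where
  "shatters C S \<longleftrightarrow> (\<forall>T\<subseteq>S. \<exists>c\<in>C. c \<inter> S = T)"

definition vcdim :: "'x set set \<Rightarrow> 'x set \<Rightarrow> nat" where
  "vcdim C X = Max {card S | S. S \<subseteq> X \<and> shatters C S}"

definition maximum_class :: "'x set set \<Rightarrow> 'x set \<Rightarrow> bool" where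
  "maximum_class C X \<longleftrightarrow> card C = (\<Sum>i\<le>vcdim C X. card X choose i)"

definition maximal_class :: "'x set set \<Rightarrow> 'x set \<Rightarrow> bool" where
  "maximal_class C X \<longleftrightarrow> (\<forall>c. c \<subseteq> X \<and> c \<notin> C \<longrightarrow> vcdim (insert c C) X > vcdim C X)"

end

theory Submission
  imports Defs
begin

text \<open>An acyclic CP-net is consistent, so it orients every swap in exactly one direction, and
  reversing all its conditional preference tables yields an acyclic CP-net that orients every
  swap the other way. Hence the class is closed under complement. It is also not all of Pow X:
  a labelling that orients a cycle of swaps (available once a variable has three values or two
  variables exist) is never induced by a consistent net.

  A nonempty complement-closed class C with C \<noteq> Pow X is neither maximal nor maximum. Adding a
  concept creates no new shattered set: if c alone realises T on S, the complement of the
  concept realising S - T realises T as well. And the concepts avoiding a fixed point x form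
  exactly half of C while shattering no set of size d = vcdim C X, so by Sauer-Shelah
  card C \<le> 2 * (\<Sum>i<d. (N - 1) choose i) < (\<Sum>i\<le>d. N choose i), where N = card X > d.\<close>

section \<open>Complement-closed classes are not maximal\<close>

lemma shatters_mono: "C \<subseteq> C' \<Longrightarrow> shatters C S \<Longrightarrow> shatters C' S"
  unfolding shatters_def by (meson subsetD)

lemma shatters_empty: "C \<noteq> {} \<Longrightarrow> shatters C {}"
  unfolding shatters_def by auto

lemma shatters_self_iff: "C \<subseteq> Pow X \<Longrightarrow> shatters C X \<longleftrightarrow> C = Pow X"
  unfolding shatters_def by (metis Int_absorb2 Pow_iff subsetD subsetI subset_antisym)

lemma shatters_insert_complement_closed:
  assumes closed: "\<forall>c\<in>C. X - c \<in> C" and "C \<noteq> {}" and "S \<subseteq> X"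
    and sh: "shatters (insert c C) S"
  shows "shatters C S"
  unfolding shatters_def
proof (intro allI impI)
  fix T assume "T \<subseteq> S"
  show "\<exists>c'\<in>C. c' \<inter> S = T"
  proof (rule ccontr)
    assume not_realised: "\<not> (\<exists>c'\<in>C. c' \<inter> S = T)"
    obtain c' where "c' \<in> insert c C" "c' \<inter> S = T"
      using sh \<open>T \<subseteq> S\<close> unfolding shatters_def by blast
    then have cT: "c \<inter> S = T" using not_realised by blast
    obtain c'' where c'': "c'' \<in> insert c C" "c'' \<inter> S = S - T"
      using sh unfolding shatters_def by (meson Diff_subset)
    show False
    proof (cases "c'' \<in> C")
      case True
      have "(X - c'') \<inter> S = T" using c''(2) \<open>S \<subseteq> X\<close> \<open>T \<subseteq> S\<close> by blast
      then show False using closed True not_realised by blast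
    next
      case False
      then have "S = {}" using c'' cT by blast
      then show False using not_realised \<open>C \<noteq> {}\<close> \<open>T \<subseteq> S\<close> by blast
    qed
  qed
qed

lemma vcdim_ge:
  assumes "finite X" "S \<subseteq> X" "shatters C S"
  shows "card S \<le> vcdim C X"
proof -
  have "finite {card S | S. S \<subseteq> X \<and> shatters C S}"
    by (rule finite_subset[of _ "card ` Pow X"]) (use assms(1) in auto)
  then show ?thesis unfolding vcdim_def using assms(2,3) by (intro Max_ge) auto
qed

lemma vcdim_attained:
  assumes "finite X" "C \<noteq> {}"
  obtains S where "S \<subseteq> X" "shatters C S" "card S = vcdim C X"
proof -
  let ?M = "{card S | S. S \<subseteq> X \<and> shatters C S}"
  have "finite ?M" by (rule finite_subset[of _ "card ` Pow X"]) (use assms(1) in auto)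
  moreover have "?M \<noteq> {}" using shatters_empty[OF assms(2)] by blast
  ultimately have "vcdim C X \<in> ?M" unfolding vcdim_def by (rule Max_in)
  then obtain S where "S \<subseteq> X" "shatters C S" "card S = vcdim C X" by auto
  then show ?thesis by (rule that)
qed

lemma vcdim_insert_complement_closed:
  assumes "C \<noteq> {}" and "\<forall>c\<in>C. X - c \<in> C"
  shows "vcdim (insert c C) X = vcdim C X"
proof -
  have "S \<subseteq> X \<and> shatters (insert c C) S \<longleftrightarrow> S \<subseteq> X \<and> shatters C S" for S
    using shatters_insert_complement_closed[OF assms(2,1)] shatters_mono[of C "insert c C"]
    by blast
  then show ?thesis unfolding vcdim_def by simp
qed

lemma not_maximal_class_if_complement_closed:
  assumes "C \<subseteq> Pow X" "C \<noteq> Pow X" "C \<noteq> {}" "\<forall>c\<in>C. X - c \<in> C"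
  shows "\<not> maximal_class C X"
proof -
  obtain c where "c \<subseteq> X" "c \<notin> C" using assms(1,2) by blast
  then show ?thesis
    unfolding maximal_class_def using vcdim_insert_complement_closed[OF assms(3,4), of c] by auto
qed

section \<open>The Sauer--Shelah lemma\<close>

lemma card_eq_card_Diff_image_add_card_pairs:
  assumes "finite C"
  shows "card C = card ((\<lambda>c. c - {x}) ` C) + card {c \<in> C. x \<notin> c \<and> insert x c \<in> C}"
proof -
  define A where "A = {c \<in> C. x \<notin> c}"
  define B where "B = {c \<in> C. x \<in> c}"
  let ?g = "\<lambda>c. c - {x}"
  have CAB: "C = A \<union> B" "A \<inter> B = {}" unfolding A_def B_def by auto
  have "?g ` A = A"
  proof -
    have "\<forall>c\<in>A. ?g c = id c" unfolding A_def by auto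
    then show ?thesis using image_cong[of A A ?g id] by simp
  qed
  then have "?g ` C = A \<union> ?g ` B" using CAB(1) by (simp add: image_Un)
  moreover have "A \<inter> ?g ` B = {c \<in> C. x \<notin> c \<and> insert x c \<in> C}"
  proof (intro set_eqI iffI)
    fix c assume "c \<in> A \<inter> ?g ` B"
    then obtain b where "c \<in> C" "x \<notin> c" "b \<in> C" "x \<in> b" "c = b - {x}"
      unfolding A_def B_def by blast
    then show "c \<in> {c \<in> C. x \<notin> c \<and> insert x c \<in> C}" by (simp add: insert_absorb)
  next
    fix c assume c: "c \<in> {c \<in> C. x \<notin> c \<and> insert x c \<in> C}"
    then have "c = ?g (insert x c)" by simp
    then show "c \<in> A \<inter> ?g ` B" using c unfolding A_def B_def by blast
  qed
  moreover have "card B = card (?g ` B)"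
    by (rule card_image[symmetric]) (auto simp: inj_on_def B_def)
  moreover have "card C = card A + card B"
    using CAB assms card_Un_disjoint[of A B] by simp
  ultimately show ?thesis
    using card_Un_Int[of A "?g ` B"] assms unfolding A_def B_def by simp
qed

lemma shatters_Diff_image:
  assumes "x \<notin> S" "shatters ((\<lambda>c. c - {x}) ` C) S"
  shows "shatters C S"
  unfolding shatters_def
proof (intro allI impI)
  fix T assume "T \<subseteq> S"
  then obtain c where "c \<in> C" "(c - {x}) \<inter> S = T" using assms(2) unfolding shatters_def by blast
  moreover have "(c - {x}) \<inter> S = c \<inter> S" using assms(1) by blast
  ultimately show "\<exists>c\<in>C. c \<inter> S = T" by auto
qed


lemma shatters_insert_pairs:
  assumes "x \<notin> S" "shatters {c \<in> C. x \<notin> c \<and> insert x c \<in> C} S"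
  shows "shatters C (insert x S)"
  unfolding shatters_def
proof (intro allI impI)
  fix T assume T: "T \<subseteq> insert x S"
  then obtain c where c: "c \<in> C" "x \<notin> c" "insert x c \<in> C" "c \<inter> S = T - {x}"
    using assms(2) unfolding shatters_def by (metis (no_types, lifting) Diff_subset_conv insert_is_Un mem_Collect_eq)
  show "\<exists>c\<in>C. c \<inter> insert x S = T"
  proof (cases "x \<in> T")
    case True
    then have "insert x c \<inter> insert x S = T" using c(4) by blast
    then show ?thesis using c(3) by blast
  next
    case False
    then have "c \<inter> insert x S = T" using c(2,4) T by blast
    then show ?thesis using c(1) by blast
  qed
qed

lemma sum_choose_Suc:
  "(\<Sum>i<Suc d. Suc N choose i) = (\<Sum>i<Suc d. N choose i) + (\<Sum>i<d. N choose i)"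
  by (induction d) auto

lemma sauer_shelah:
  assumes "finite X" and "C \<subseteq> Pow X" and "\<forall>S\<subseteq>X. shatters C S \<longrightarrow> card S < d"
  shows "card C \<le> (\<Sum>i<d. card X choose i)"
  using assms
proof (induction X arbitrary: C d rule: finite_induct)
  case empty
  show ?case
  proof (cases "C = {}")
    case False
    then obtain d' where "d = Suc d'"
      using empty.prems(2) shatters_empty by (metis empty_subsetI gr0_implies_Suc card.empty)
    moreover have "card C \<le> 1" using empty.prems(1) card_mono[of "{{}}" C] by simp
    ultimately show ?thesis by (simp add: lessThan_Suc_atMost sum.atMost_shift)
  qed simp
next
  case (insert x F)
  show ?case
  proof (cases "C = {}")
    case False
    then obtain d' where d: "d = Suc d'"
      using insert.prems(2) shatters_empty by (metis empty_subsetI gr0_implies_Suc card.empty)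
    define C1 where "C1 = (\<lambda>c. c - {x}) ` C"
    define C2 where "C2 = {c \<in> C. x \<notin> c \<and> insert x c \<in> C}"
    have "finite C" using insert.prems(1) insert.hyps(1) by (meson finite_Pow_iff finite_insert finite_subset)
    then have "card C = card C1 + card C2"
      unfolding C1_def C2_def by (rule card_eq_card_Diff_image_add_card_pairs)
    have "C1 \<subseteq> Pow F" using insert.prems(1) unfolding C1_def by auto
    moreover have "\<forall>S\<subseteq>F. shatters C1 S \<longrightarrow> card S < d"
      using insert.prems(2) insert.hyps(2) shatters_Diff_image unfolding C1_def
      by (metis subset_insertI2 subset_iff)
    ultimately have "card C1 \<le> (\<Sum>i<d. card F choose i)" by (rule insert.IH)
    have "C2 \<subseteq> Pow F" using insert.prems(1) unfolding C2_def by auto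
    moreover have "\<forall>S\<subseteq>F. shatters C2 S \<longrightarrow> card S < d'"
    proof (intro allI impI)
      fix S assume S: "S \<subseteq> F" "shatters C2 S"
      then have "x \<notin> S" using insert.hyps(2) by blast
      then have "shatters C (insert x S)" using S(2) unfolding C2_def by (rule shatters_insert_pairs)
      then have "card (insert x S) < d" using insert.prems(2) S(1) by blast
      then show "card S < d'"
        using \<open>x \<notin> S\<close> finite_subset[OF S(1) insert.hyps(1)] d by simp
    qed
    ultimately have "card C2 \<le> (\<Sum>i<d'. card F choose i)" by (rule insert.IH)
    have "(\<Sum>i<d. card (insert x F) choose i) = (\<Sum>i<d. card F choose i) + (\<Sum>i<d'. card F choose i)"
      using insert.hyps d sum_choose_Suc by simp
    then show ?thesis
      using \<open>card C = card C1 + card C2\<close> \<open>card C1 \<le> _\<close> \<open>card C2 \<le> _\<close> by linarith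
  qed simp
qed

section \<open>Complement-closed classes are not maximum\<close>

lemma card_eq_twice_card_avoiding:
  assumes "finite X" "x \<in> X" "C \<subseteq> Pow X" and closed: "\<forall>c\<in>C. X - c \<in> C"
  shows "card C = 2 * card {c \<in> C. x \<notin> c}"
proof -
  define A where "A = {c \<in> C. x \<notin> c}"
  define B where "B = (\<lambda>c. X - c) ` A"
  have "C \<subseteq> A \<union> B"
  proof
    fix c assume c: "c \<in> C"
    show "c \<in> A \<union> B"
    proof (cases "x \<in> c")
      case True
      then have "X - c \<in> A" using c closed unfolding A_def by blast
      moreover have "c = X - (X - c)" using c assms(3) by blast
      ultimately show ?thesis unfolding B_def by blast
    next
      case False
      then show ?thesis using c unfolding A_def by blast
    qed
  qed
  moreover have "A \<union> B \<subseteq> C" using closed unfolding A_def B_def by blast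
  ultimately have "C = A \<union> B" by (rule subset_antisym)
  moreover have "A \<inter> B = {}" using assms(2) unfolding A_def B_def by blast
  moreover have "finite A" using finite_subset[OF assms(3)] assms(1) unfolding A_def by simp
  moreover have "card B = card A"
    unfolding B_def using assms(3) by (intro card_image) (auto simp: inj_on_def A_def)
  ultimately show ?thesis unfolding A_def[symmetric] B_def[symmetric]
    using card_Un_disjoint[of A B] by (simp add: B_def)
qed

lemma shatters_insert_if_complement_closed:
  assumes "x \<in> X" "S \<subseteq> X" and closed: "\<forall>c\<in>C. X - c \<in> C"
    and sh: "shatters {c \<in> C. x \<notin> c} S"
  shows "shatters C (insert x S)"
  unfolding shatters_def
proof (intro allI impI)
  fix T assume T: "T \<subseteq> insert x S"
  show "\<exists>c\<in>C. c \<inter> insert x S = T"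
  proof (cases "x \<in> T")
    case True
    obtain c where "c \<in> C" "x \<notin> c" "c \<inter> S = S - T"
      using sh unfolding shatters_def by (metis (no_types, lifting) Diff_subset mem_Collect_eq)
    moreover have "(X - c) \<inter> insert x S = T" using calculation True T assms(1,2) by blast
    ultimately show ?thesis using closed by blast
  next
    case False
    then obtain c where "c \<in> C" "x \<notin> c" "c \<inter> S = T"
      using sh T unfolding shatters_def by (metis (no_types, lifting) mem_Collect_eq subset_insert)
    then show ?thesis by blast
  qed
qed

lemma sum_atMost_choose_Suc:
  "(\<Sum>i\<le>d. Suc N choose i) = 2 * (\<Sum>i<d. N choose i) + (N choose d)"
  using sum_choose_Suc[where d = d and N = N] unfolding lessThan_Suc_atMost[symmetric] by simp

lemma not_maximum_class_if_complement_closed: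
  assumes "finite X" "C \<subseteq> Pow X" "C \<noteq> Pow X" "C \<noteq> {}" and closed: "\<forall>c\<in>C. X - c \<in> C"
  shows "\<not> maximum_class C X"
proof -
  define d where "d = vcdim C X"
  obtain S0 where S0: "S0 \<subseteq> X" "shatters C S0" "card S0 = d"
    using vcdim_attained[OF assms(1,4)] unfolding d_def .
  have "S0 \<noteq> X" using S0(2) shatters_self_iff[OF assms(2)] assms(3) by blast
  then have "d < card X" using S0 assms(1) by (metis card_seteq not_le_imp_less)
  then obtain x where "x \<in> X" by fastforce
  define A where "A = {c \<in> C. x \<notin> c}"
  have "\<forall>S\<subseteq>X - {x}. shatters A S \<longrightarrow> card S < d"
  proof (intro allI impI)
    fix S assume S: "S \<subseteq> X - {x}" "shatters A S"
    then have "shatters C (insert x S)"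
      using shatters_insert_if_complement_closed[OF \<open>x \<in> X\<close> _ closed] unfolding A_def by blast
    then have "card (insert x S) \<le> d"
      unfolding d_def using vcdim_ge[OF assms(1)] S(1) \<open>x \<in> X\<close> by blast
    moreover have "finite S" using S(1) assms(1) by (meson finite_Diff finite_subset)
    moreover have "x \<notin> S" using S(1) by blast
    ultimately show "card S < d" by simp
  qed
  moreover have "A \<subseteq> Pow (X - {x})" using assms(2) unfolding A_def by blast
  ultimately have "card A \<le> (\<Sum>i<d. (card X - 1) choose i)"
    using sauer_shelah[of "X - {x}" A d] assms(1) \<open>x \<in> X\<close> by simp
  moreover have "card C = 2 * card A"
    unfolding A_def using card_eq_twice_card_avoiding[OF assms(1) \<open>x \<in> X\<close> assms(2) closed] .
  moreover have "(\<Sum>i\<le>d. card X choose i) = 2 * (\<Sum>i<d. (card X - 1) choose i) + ((card X - 1) choose d)"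
  proof -
    have "Suc (card X - 1) = card X" using \<open>d < card X\<close> by simp
    then show ?thesis using sum_atMost_choose_Suc[where d = d and N = "card X - 1"] by simp
  qed
  moreover have "0 < (card X - 1) choose d" using \<open>d < card X\<close> by simp
  ultimately show ?thesis unfolding maximum_class_def d_def by linarith
qed

section \<open>Consistency of acyclic CP-nets\<close>

lemma outcomes_update:
  assumes "u \<in> outcomes n m" "a < m"
  shows "u[i := a] \<in> outcomes n m"
  using assms by (cases "i < length u") (auto simp: outcomes_def nth_list_update)

lemma finite_outcomes: "finite (outcomes n m)"
proof (rule finite_subset)
  show "outcomes n m \<subseteq> {xs. set xs \<subseteq> {0..<m} \<and> length xs = n}"
    unfolding outcomes_def by (auto simp: in_set_conv_nth)
  show "finite {xs. set xs \<subseteq> {0..<m} \<and> length xs = n}"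
    by (rule finite_lists_length_eq) simp
qed

lemma finite_swap_space: "swap_space n m X \<Longrightarrow> finite X"
  by (rule finite_subset[of _ "outcomes n m \<times> outcomes n m"])
    (auto simp: swap_space_def is_swap_def finite_outcomes)

lemma cpnet_parents: "cpnet n m Pa ord \<Longrightarrow> i < n \<Longrightarrow> Pa i \<subseteq> {0..<n} - {i}"
  unfolding cpnet_def by blast

lemma cpnet_strict_linear_order:
  "cpnet n m Pa ord \<Longrightarrow> i < n \<Longrightarrow> u \<in> outcomes n m \<Longrightarrow> strict_linear_order_on {0..<m} (ord i u)"
  unfolding cpnet_def by blast

lemma cpnet_context:
  assumes "cpnet n m Pa ord" "i < n" "u \<in> outcomes n m" "u' \<in> outcomes n m"
    "\<forall>j\<in>Pa i. u ! j = u' ! j"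
  shows "ord i u = ord i u'"
  using assms unfolding cpnet_def by blast

lemma cpnet_ord_update_self:
  assumes net: "cpnet n m Pa ord" and "u \<in> outcomes n m" "i < n" "a < m"
  shows "ord i (u[i := a]) = ord i u"
proof (rule cpnet_context[OF net \<open>i < n\<close> outcomes_update[OF assms(2,4)] assms(2)])
  have "i \<notin> Pa i" using cpnet_parents[OF net \<open>i < n\<close>] by blast
  then show "\<forall>j\<in>Pa i. u[i := a] ! j = u ! j" by (metis nth_list_update_neq)
qed

lemma improving_flipE:
  assumes "(u, w) \<in> improving_flip n m ord"
  obtains i a where "u \<in> outcomes n m" "i < n" "a < m" "w = u[i := a]" "(a, u ! i) \<in> ord i u"
  using assms unfolding improving_flip_def by blast

lemma improving_flip_nth:
  assumes net: "cpnet n m Pa ord" and flip: "(u, w) \<in> improving_flip n m ord"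
  obtains i where "i < n" "w ! i \<noteq> u ! i" "(w ! i, u ! i) \<in> ord i u"
    "\<And>j. j \<noteq> i \<Longrightarrow> w ! j = u ! j"
proof -
  obtain i a where u: "u \<in> outcomes n m" "i < n" "a < m" "w = u[i := a]" "(a, u ! i) \<in> ord i u"
    using flip by (rule improving_flipE)
  moreover have "irrefl (ord i u)"
    using cpnet_strict_linear_order[OF net \<open>i < n\<close> u(1)] by (simp add: strict_linear_order_on_def)
  ultimately have "w ! i = a" "a \<noteq> u ! i" by (auto simp: outcomes_def irrefl_def)
  then show ?thesis using that u by simp
qed

lemma chain_rtrancl:
  assumes "\<And>t. t < k \<Longrightarrow> (g (Suc t), g t) \<in> Q" and "s \<le> t" "t \<le> k"
  shows "(g t, g s) \<in> Q\<^sup>*"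
  using assms(2,3)
proof (induction t rule: dec_induct)
  case (step t)
  then have "(g (Suc t), g t) \<in> Q" using assms(1) by simp
  moreover have "(g t, g s) \<in> Q\<^sup>*" using step by simp
  ultimately show ?case by (rule converse_rtrancl_into_rtrancl)
qed simp

lemma improving_path_fixed_context:
  assumes net: "cpnet n m Pa ord"
    and path: "\<And>t. t < k \<Longrightarrow> (f t, f (Suc t)) \<in> improving_flip n m ord"
    and ctx: "\<And>t. t < k \<Longrightarrow> ord i (f t) = R" and "trans R"
    and changed: "t0 < k" "f (Suc t0) ! i \<noteq> f t0 ! i"
  shows "(f k ! i, f 0 ! i) \<in> R"
proof -
  have step: "(f (Suc t) ! i, f t ! i) \<in> R" if "t < k" "f (Suc t) ! i \<noteq> f t ! i" for t
  proof -
    obtain j where "(f (Suc t) ! j, f t ! j) \<in> ord j (f t)" "\<And>l. l \<noteq> j \<Longrightarrow> f (Suc t) ! l = f t ! l"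
      by (rule improving_flip_nth[OF net path[OF \<open>t < k\<close>]]) blast
    then show ?thesis using that ctx by metis
  qed
  then have "(f (Suc t) ! i, f t ! i) \<in> R\<^sup>=" if "t < k" for t using that by auto
  then have "(f t ! i, f s ! i) \<in> R\<^sup>*" if "s \<le> t" "t \<le> k" for s t
    using chain_rtrancl[where g = "\<lambda>t. f t ! i" and Q = "R\<^sup>=", OF _ that] by simp
  then have "(f k ! i, f (Suc t0) ! i) \<in> R\<^sup>*" "(f t0 ! i, f 0 ! i) \<in> R\<^sup>*"
    using changed(1) by auto
  moreover have "(f (Suc t0) ! i, f t0 ! i) \<in> R" using step changed by blast
  ultimately have "(f k ! i, f 0 ! i) \<in> R\<^sup>+"
    by (meson rtrancl_into_trancl1 trancl_rtrancl_trancl)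
  then show ?thesis using \<open>trans R\<close> by simp
qed

text \<open>In an improving cycle pick a changed variable none of
  whose parents changes; its context is then fixed along the cycle, so its value strictly
  improves with respect to a single strict order and cannot return to where it started.\<close>

lemma cp_acyclic_parent_minimal:
  assumes net: "cpnet n m Pa ord" and acy: "cp_acyclic n Pa" and "V \<noteq> {}"
  obtains i where "i \<in> V" "\<And>j. i < n \<Longrightarrow> j \<in> Pa i \<Longrightarrow> j \<notin> V"
proof -
  have "finite {(j, i). i < n \<and> j \<in> Pa i}"
    by (rule finite_subset[of _ "{0..<n} \<times> {0..<n}"]) (auto dest: cpnet_parents[OF net])
  then have "wf {(j, i). i < n \<and> j \<in> Pa i}"
    using acy unfolding cp_acyclic_def by (rule finite_acyclic_wf)
  moreover obtain i0 where "i0 \<in> V" using \<open>V \<noteq> {}\<close> by blast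
  ultimately obtain i where "i \<in> V" and "\<And>j. (j, i) \<in> {(j, i). i < n \<and> j \<in> Pa i} \<Longrightarrow> j \<notin> V"
    by (rule wfE_min) blast
  then show ?thesis using that by blast
qed

lemma cpnet_acyclic_no_improving_cycle:
  assumes net: "cpnet n m Pa ord" and acy: "cp_acyclic n Pa"
  shows "(u, u) \<notin> (improving_flip n m ord)\<^sup>+"
proof
  let ?F = "improving_flip n m ord"
  assume "(u, u) \<in> ?F\<^sup>+"
  then obtain k where "0 < k" "(u, u) \<in> ?F ^^ k" by (auto simp: trancl_power)
  then obtain f where "f 0 = u" "f k = u" and path: "\<And>t. t < k \<Longrightarrow> (f t, f (Suc t)) \<in> ?F"
    by (auto simp: relpow_fun_conv)
  have outcome: "f t \<in> outcomes n m" if "t < k" for t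
    using path[OF that] by (rule improving_flipE)
  define V where "V = {j. \<exists>t<k. f (Suc t) ! j \<noteq> f t ! j}"
  have changed_var: "\<exists>j<n. j \<in> V \<and> (\<forall>l. f (Suc t) ! l \<noteq> f t ! l \<longrightarrow> l = j)" if "t < k" for t
  proof -
    obtain j where "j < n" "f (Suc t) ! j \<noteq> f t ! j" "\<And>l. l \<noteq> j \<Longrightarrow> f (Suc t) ! l = f t ! l"
      by (rule improving_flip_nth[OF net path[OF \<open>t < k\<close>]]) blast
    then show ?thesis using \<open>t < k\<close> unfolding V_def by blast
  qed
  then have "V \<noteq> {}" using \<open>0 < k\<close> by blast
  then obtain i where "i \<in> V" and parents_unchanged: "\<And>j. i < n \<Longrightarrow> j \<in> Pa i \<Longrightarrow> j \<notin> V"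
    by (rule cp_acyclic_parent_minimal[OF net acy]) blast
  then obtain t0 where t0: "t0 < k" "f (Suc t0) ! i \<noteq> f t0 ! i" unfolding V_def by blast
  then have "i < n" using changed_var by blast
  have parents_constant: "f t ! j = f 0 ! j" if "j \<in> Pa i" "t \<le> k" for j t
  proof -
    have "f (Suc s) ! j = f s ! j" if "s < k" for s
      using parents_unchanged[OF \<open>i < n\<close> \<open>j \<in> Pa i\<close>] that unfolding V_def by blast
    then show ?thesis using \<open>t \<le> k\<close> by (induction t) auto
  qed
  have context_fixed: "ord i (f t) = ord i (f 0)" if "t < k" for t
  proof (rule cpnet_context[OF net \<open>i < n\<close>])
    show "f t \<in> outcomes n m" by (rule outcome[OF that])
    show "f 0 \<in> outcomes n m" by (rule outcome[OF \<open>0 < k\<close>])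
    show "\<forall>j\<in>Pa i. f t ! j = f 0 ! j" using parents_constant that less_imp_le by blast
  qed
  have order: "strict_linear_order_on {0..<m} (ord i (f 0))"
    using cpnet_strict_linear_order[OF net \<open>i < n\<close> outcome[OF \<open>0 < k\<close>]] .
  then have "(f k ! i, f 0 ! i) \<in> ord i (f 0)"
    using improving_path_fixed_context[OF net path context_fixed _ t0]
    by (simp add: strict_linear_order_on_def)
  then show False using order \<open>f 0 = u\<close> \<open>f k = u\<close>
    by (simp add: strict_linear_order_on_def irrefl_def)
qed

section \<open>Swaps and reversed CP-nets\<close>

lemma is_swapE:
  assumes "is_swap n m (u, w)"
  obtains i where "u \<in> outcomes n m" "w \<in> outcomes n m" "i < n" "u ! i \<noteq> w ! i"
    "w = u[i := w ! i]" "u = w[i := u ! i]"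
proof -
  have outcomes: "u \<in> outcomes n m" "w \<in> outcomes n m" using assms unfolding is_swap_def by simp_all
  have "card {j. j < n \<and> u ! j \<noteq> w ! j} = 1" using assms unfolding is_swap_def by simp
  then obtain i where diff: "{j. j < n \<and> u ! j \<noteq> w ! j} = {i}" by (rule card_1_singletonE)
  then have i: "i < n" "u ! i \<noteq> w ! i" and others: "\<And>j. j < n \<Longrightarrow> j \<noteq> i \<Longrightarrow> u ! j = w ! j"
    by blast+
  have lengths: "length u = n" "length w = n" using outcomes by (simp_all add: outcomes_def)
  have "w = u[i := w ! i]" by (rule nth_equalityI) (auto simp: lengths i(1) nth_list_update others)
  moreover have "u = w[i := u ! i]" by (rule nth_equalityI) (auto simp: lengths i(1) nth_list_update others)
  ultimately show ?thesis using that outcomes i by blast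
qed

lemma is_swap_update:
  assumes "u \<in> outcomes n m" "i < n" "a < m" "a \<noteq> u ! i"
  shows "is_swap n m (u[i := a], u)"
proof -
  have "{j. j < n \<and> u[i := a] ! j \<noteq> u ! j} = {i}"
    using assms by (auto simp: nth_list_update outcomes_def)
  then show ?thesis using assms outcomes_update unfolding is_swap_def by simp
qed

lemma is_swap_sym: "is_swap n m (u, w) \<Longrightarrow> is_swap n m (w, u)"
  unfolding is_swap_def by (simp add: eq_commute)

lemma swap_improving_flip:
  assumes net: "cpnet n m Pa ord" and "is_swap n m (u, w)"
  shows "(u, w) \<in> improving_flip n m ord \<or> (w, u) \<in> improving_flip n m ord"
proof -
  obtain i where u: "u \<in> outcomes n m" and w: "w \<in> outcomes n m" and i: "i < n" "u ! i \<noteq> w ! i"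
    and updates: "w = u[i := w ! i]" "u = w[i := u ! i]"
    using assms(2) by (rule is_swapE)
  have in_domain: "u ! i < m" "w ! i < m" using u w i by (simp_all add: outcomes_def)
  have same_order: "ord i w = ord i u"
    using cpnet_ord_update_self[OF net u i(1) in_domain(2)] updates(1) by simp
  have "total_on {0..<m} (ord i u)"
    using cpnet_strict_linear_order[OF net i(1) u] by (simp add: strict_linear_order_on_def)
  then have "(w ! i, u ! i) \<in> ord i u \<or> (u ! i, w ! i) \<in> ord i w"
    using in_domain i(2) same_order unfolding total_on_def by auto
  then show ?thesis
    unfolding improving_flip_def using u w i(1) in_domain updates by blast
qed

lemma swap_prefers_iff:
  assumes net: "cpnet n m Pa ord" and acy: "cp_acyclic n Pa" and "is_swap n m (u, w)"
  shows "cp_prefers n m ord w u \<longleftrightarrow> \<not> cp_prefers n m ord u w"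
proof -
  have "cp_prefers n m ord w u \<or> cp_prefers n m ord u w"
    using swap_improving_flip[OF net assms(3)] unfolding cp_prefers_def by blast
  moreover have "\<not> (cp_prefers n m ord w u \<and> cp_prefers n m ord u w)"
    using cpnet_acyclic_no_improving_cycle[OF net acy, of u] unfolding cp_prefers_def
    by (meson trancl_trans)
  ultimately show ?thesis by blast
qed

definition reverse_cpts :: "(nat \<Rightarrow> nat list \<Rightarrow> (nat \<times> nat) set) \<Rightarrow> nat \<Rightarrow> nat list \<Rightarrow> (nat \<times> nat) set"
  where "reverse_cpts ord i u = (ord i u)\<inverse>"

lemma reverse_cpts_reverse_cpts [simp]: "reverse_cpts (reverse_cpts ord) = ord"
  by (simp add: reverse_cpts_def fun_eq_iff)

lemma strict_linear_order_on_converse: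
  "strict_linear_order_on A r \<Longrightarrow> strict_linear_order_on A (r\<inverse>)"
  unfolding strict_linear_order_on_def total_on_def irrefl_def trans_def by blast

lemma cpnet_reverse_cpts:
  assumes "cpnet n m Pa ord"
  shows "cpnet n m Pa (reverse_cpts ord)"
proof -
  have parents: "\<forall>i<n. Pa i \<subseteq> {0..<n} - {i}"
    and orders: "\<forall>i<n. \<forall>u\<in>outcomes n m.
        ord i u \<subseteq> {0..<m} \<times> {0..<m} \<and> strict_linear_order_on {0..<m} (ord i u)"
    and same_context: "\<forall>i<n. \<forall>u\<in>outcomes n m. \<forall>u'\<in>outcomes n m.
        (\<forall>j\<in>Pa i. u ! j = u' ! j) \<longrightarrow> ord i u = ord i u'"
    and non_dummy: "\<forall>i<n. \<forall>j\<in>Pa i. \<exists>u\<in>outcomes n m. \<exists>a<m. ord i u \<noteq> ord i (u[j := a])"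
    using assms unfolding cpnet_def by blast+
  have "\<forall>i<n. \<forall>u\<in>outcomes n m. (ord i u)\<inverse> \<subseteq> {0..<m} \<times> {0..<m}
      \<and> strict_linear_order_on {0..<m} ((ord i u)\<inverse>)"
    using orders strict_linear_order_on_converse by blast
  moreover have "\<forall>i<n. \<forall>j\<in>Pa i. \<exists>u\<in>outcomes n m. \<exists>a<m. (ord i u)\<inverse> \<noteq> (ord i (u[j := a]))\<inverse>"
    using non_dummy by simp
  moreover have "\<forall>i<n. \<forall>u\<in>outcomes n m. \<forall>u'\<in>outcomes n m.
      (\<forall>j\<in>Pa i. u ! j = u' ! j) \<longrightarrow> (ord i u)\<inverse> = (ord i u')\<inverse>"
    using same_context by blast
  ultimately show ?thesis
    using parents unfolding cpnet_def reverse_cpts_def by blast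
qed

lemma improving_flip_reverse_cpts:
  assumes net: "cpnet n m Pa ord" and "(u, w) \<in> improving_flip n m ord"
  shows "(w, u) \<in> improving_flip n m (reverse_cpts ord)"
proof -
  obtain i a where u: "u \<in> outcomes n m" and i: "i < n" and "a < m" and w: "w = u[i := a]"
    and better: "(a, u ! i) \<in> ord i u"
    using assms(2) by (rule improving_flipE)
  have "length u = n" using u by (simp add: outcomes_def)
  then have "w ! i = a" "u = w[i := u ! i]" using i w by simp_all
  moreover have "w \<in> outcomes n m" using u \<open>a < m\<close> w by (simp add: outcomes_update)
  moreover have "u ! i < m" using u i by (simp add: outcomes_def)
  moreover have "ord i w = ord i u" using cpnet_ord_update_self[OF net u i \<open>a < m\<close>] w by simp
  ultimately show ?thesis
    unfolding improving_flip_def reverse_cpts_def using i better by auto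
qed

lemma improving_flip_reverse_cpts_eq:
  assumes "cpnet n m Pa ord"
  shows "improving_flip n m (reverse_cpts ord) = (improving_flip n m ord)\<inverse>"
  using improving_flip_reverse_cpts[OF assms]
    improving_flip_reverse_cpts[OF cpnet_reverse_cpts[OF assms], unfolded reverse_cpts_reverse_cpts]
  by auto

lemma cp_concept_reverse_cpts:
  assumes net: "cpnet n m Pa ord" and acy: "cp_acyclic n Pa" and X: "swap_space n m X"
  shows "cp_concept n m (reverse_cpts ord) X = X - cp_concept n m ord X"
proof -
  have "cp_prefers n m (reverse_cpts ord) u w \<longleftrightarrow> \<not> cp_prefers n m ord u w" if "(u, w) \<in> X" for u w
  proof -
    have "is_swap n m (u, w)" using X that unfolding swap_space_def by blast
    then show ?thesis
      using swap_prefers_iff[OF net acy] unfolding cp_prefers_def improving_flip_reverse_cpts_eq[OF net]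
      by (simp add: trancl_converse)
  qed
  then show ?thesis unfolding cp_concept_def by auto
qed

lemma C_ac_complement_closed:
  assumes "swap_space n m X" and "c \<in> C_ac n m k X"
  shows "X - c \<in> C_ac n m k X"
proof -
  obtain Pa ord where "c = cp_concept n m ord X" "cpnet n m Pa ord" "cp_acyclic n Pa" "k_bounded n k Pa"
    using assms(2) unfolding C_ac_def by blast
  then have "X - c = cp_concept n m (reverse_cpts ord) X"
    using cp_concept_reverse_cpts[OF _ _ assms(1)] by simp
  then show ?thesis
    using cpnet_reverse_cpts \<open>cpnet n m Pa ord\<close> \<open>cp_acyclic n Pa\<close> \<open>k_bounded n k Pa\<close>
    unfolding C_ac_def by blast
qed

lemma C_ac_subset_Pow: "C_ac n m k X \<subseteq> Pow X"
  unfolding C_ac_def cp_concept_def by auto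

lemma C_ac_nonempty: "C_ac n m k X \<noteq> {}"
proof -
  have "cpnet n m (\<lambda>_. {}) (\<lambda>i u. {(a, b). a < b \<and> b < m})"
    unfolding cpnet_def strict_linear_order_on_def trans_def irrefl_def total_on_def
    by (auto simp: linorder_neq_iff)
  moreover have "cp_acyclic n (\<lambda>_. {})" unfolding cp_acyclic_def by (simp add: acyclic_def)
  moreover have "k_bounded n k (\<lambda>_. {})" unfolding k_bounded_def by simp
  ultimately show ?thesis unfolding C_ac_def by blast
qed

section \<open>Cycles of swaps\<close>

lemma swap_cycle_not_in_C_ac:
  assumes X: "swap_space n m X"
    and swaps: "\<And>u w. (u, w) \<in> P \<Longrightarrow> is_swap n m (u, w) \<and> (w, u) \<notin> P"
    and cycle: "(z, z) \<in> P\<^sup>+"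
  shows "X \<inter> P \<notin> C_ac n m k X"
proof
  assume "X \<inter> P \<in> C_ac n m k X"
  then obtain Pa ord where net: "cpnet n m Pa ord" and acy: "cp_acyclic n Pa"
    and concept: "cp_concept n m ord X = X \<inter> P"
    unfolding C_ac_def by auto
  let ?F = "improving_flip n m ord"
  have prefers: "cp_prefers n m ord u w" if "(u, w) \<in> P" for u w
  proof (cases "(u, w) \<in> X")
    case True
    then have "(u, w) \<in> cp_concept n m ord X" using that concept by simp
    then show ?thesis unfolding cp_concept_def by simp
  next
    case False
    have swap: "is_swap n m (u, w)" and "(w, u) \<notin> P" using swaps[OF that] by simp_all
    have "(w, u) \<in> X" using X False swap unfolding swap_space_def by blast
    moreover have "(w, u) \<notin> cp_concept n m ord X" using concept \<open>(w, u) \<notin> P\<close> by simp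
    ultimately have "\<not> cp_prefers n m ord w u" unfolding cp_concept_def by simp
    then show ?thesis using swap_prefers_iff[OF net acy swap] by simp
  qed
  have "P \<subseteq> (?F\<^sup>+)\<inverse>"
  proof (rule subrelI)
    fix u w assume "(u, w) \<in> P"
    then show "(u, w) \<in> (?F\<^sup>+)\<inverse>" using prefers unfolding cp_prefers_def by simp
  qed
  then have "(z, z) \<in> ((?F\<^sup>+)\<inverse>)\<^sup>+" using cycle by (rule trancl_mono[rotated])
  then have "(z, z) \<in> ?F\<^sup>+" by (simp add: trancl_converse)
  then show False using cpnet_acyclic_no_improving_cycle[OF net acy] by blast
qed

lemma C_ac_ne_Pow_if_three_values:
  assumes X: "swap_space n m X" and "1 \<le> n" "3 \<le> m"
  shows "C_ac n m k X \<noteq> Pow X"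
proof -
  define z where "z = replicate n (0::nat)"
  define u1 where "u1 = z[0 := 1]"
  define u2 where "u2 = u1[0 := 2]"
  have z: "z \<in> outcomes n m" using assms by (simp add: z_def outcomes_def)
  then have u1: "u1 \<in> outcomes n m" using assms unfolding u1_def by (simp add: outcomes_update)
  have entries: "z ! 0 = 0" "u1 ! 0 = 1" "u2 ! 0 = 2" "u2 = z[0 := 2]"
    using assms by (simp_all add: z_def u1_def u2_def)
  define P where "P = {(u1, z), (u2, u1), (z, u2)}"
  have "is_swap n m (u1, z)" "is_swap n m (u2, u1)" "is_swap n m (z, u2)"
    using is_swap_update[OF z, of 0 1] is_swap_update[OF u1, of 0 2]
      is_swap_sym[OF is_swap_update[OF z, of 0 2]] assms entries
    unfolding u1_def u2_def by simp_all
  moreover have "u1 \<noteq> z" "u2 \<noteq> u1" "u2 \<noteq> z" using entries by auto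
  ultimately have "\<And>u w. (u, w) \<in> P \<Longrightarrow> is_swap n m (u, w) \<and> (w, u) \<notin> P"
    unfolding P_def by auto
  moreover have "(z, z) \<in> P\<^sup>+"
    unfolding P_def by (meson insertI1 insertI2 r_into_trancl trancl_into_trancl)
  ultimately have "X \<inter> P \<notin> C_ac n m k X" by (rule swap_cycle_not_in_C_ac[OF X])
  then show ?thesis by blast
qed

lemma C_ac_ne_Pow_if_two_variables:
  assumes X: "swap_space n m X" and "2 \<le> n" "2 \<le> m"
  shows "C_ac n m k X \<noteq> Pow X"
proof -
  define z where "z = replicate n (0::nat)"
  define a where "a = z[0 := 1]"
  define b where "b = a[1 := 1]"
  define e where "e = z[1 := 1]"
  have z: "z \<in> outcomes n m" using assms by (simp add: z_def outcomes_def)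
  then have a: "a \<in> outcomes n m" and e: "e \<in> outcomes n m"
    using assms unfolding a_def e_def by (simp_all add: outcomes_update)
  have entries: "z ! 0 = 0" "z ! 1 = 0" "a ! 1 = 0" "e ! 0 = 0" "b = e[0 := 1]"
    "a ! 0 = 1" "b ! 0 = 1" "b ! 1 = 1" "e ! 1 = 1"
    using assms by (simp_all add: z_def a_def b_def e_def list_update_swap)
  define P where "P = {(a, z), (b, a), (e, b), (z, e)}"
  have "is_swap n m (a, z)" "is_swap n m (b, a)" "is_swap n m (e, b)" "is_swap n m (z, e)"
    using is_swap_update[OF z, of 0 1] is_swap_update[OF a, of 1 1]
      is_swap_sym[OF is_swap_update[OF e, of 0 1]] is_swap_sym[OF is_swap_update[OF z, of 1 1]]
      assms entries
    unfolding a_def b_def e_def by simp_all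
  moreover have "a \<noteq> z" "b \<noteq> a" "e \<noteq> b" "z \<noteq> e" "a \<noteq> e" "z \<noteq> b"
    using entries by (metis zero_neq_one)+
  ultimately have "\<And>u w. (u, w) \<in> P \<Longrightarrow> is_swap n m (u, w) \<and> (w, u) \<notin> P"
    unfolding P_def by auto
  moreover have "(z, z) \<in> P\<^sup>+"
    unfolding P_def by (meson insertI1 insertI2 r_into_trancl trancl_into_trancl)
  ultimately have "X \<inter> P \<notin> C_ac n m k X" by (rule swap_cycle_not_in_C_ac[OF X])
  then show ?thesis by blast
qed

theorem proposition4:
  fixes n m k :: nat and X :: "(nat list \<times> nat list) set"
  assumes "n \<ge> 1" and "m \<ge> 2" and "k \<le> n - 1" and "(m, k) \<noteq> (2, 0)"
    and "swap_space n m X"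
  shows "\<not> maximal_class (C_ac n m k X) X \<and> \<not> maximum_class (C_ac n m k X) X"
proof -
  have "C_ac n m k X \<noteq> Pow X"
  proof (cases "m \<ge> 3")
    case True
    then show ?thesis using C_ac_ne_Pow_if_three_values[OF assms(5,1)] by simp
  next
    case False
    then have "n \<ge> 2" using assms(2-4) by auto
    then show ?thesis using C_ac_ne_Pow_if_two_variables[OF assms(5) _ assms(2)] by simp
  qed
  moreover have "\<forall>c\<in>C_ac n m k X. X - c \<in> C_ac n m k X"
    using C_ac_complement_closed[OF assms(5)] by blast
  ultimately have "\<not> maximal_class (C_ac n m k X) X" and "\<not> maximum_class (C_ac n m k X) X"
    using not_maximal_class_if_complement_closed[OF C_ac_subset_Pow _ C_ac_nonempty]
      not_maximum_class_if_complement_closed[OF finite_swap_space[OF assms(5)] C_ac_subset_Pow _ C_ac_nonempty]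
    by simp_all
  then show ?thesis by simp
qed

end
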